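(* Let $\mathcal{P}$ be a parametrised propositional logic program over a finite alphabet $\Sigma=\Sigma_p\cup\Sigma_d$. Then (1) $\Psi_{\mathcal{P}}$ is an approximator of $\mathcal{T}_{\mathcal{P}}$; and (2) for every $\Sigma_p$-interpretation $I$, $\Psi^I_{\mathcal{P}}\circ\pi_I^2=\pi_I^2\circ\Psi_{\mathcal{P}}$.
   Context: A parametrised logic program is a finite set of rules $h\leftarrow l_1\wedge\dots\wedge l_n$ with $h\in\Sigma_d$ and each $l_i$ an atom of $\Sigma$ or its negation. For $q\in\Sigma_d$, $\varphi_q$ is the disjunction of the bodies of the rules with head $q$. $L_p$: equivalence classes $\overline\varphi$ of propositional formulas over $\Sigma_p$ ordered by entailment; $L^d_p$: maps $\Sigma_d\to L_p$ ordered pointwise. For $\mathcal{S}=(\mathcal{A}_t,\mathcal{A}_p)\in(L^d_p)^2$, $\varphi^{\mathcal{S}}\in L_p^2$ is defined by: $q^{\mathcal{S}}=(\overline q,\overline q)$ for $q\in\Sigma_p$; $q^{\mathcal{S}}=(\mathcal{A}_t(q),\mathcal{A}_p(q))$ for $q\in\Sigma_d$; $\wedge,\vee$ componentwise; $(\neg\psi)^{\mathcal{S}}=(\overline{\neg\psi_p},\overline{\neg\psi_t})$ when $\psi^{\mathcal{S}}=(\overline{\psi_t},\overline{\psi_p})$. $\Psi_{\mathcal{P}}:(L^d_p)^2\to(L^d_p)^2$ is given by $\Psi_{\mathcal{P}}(\mathcal{S})(q)=\varphi_q^{\mathcal{S}}$ (read componentwise), and $\mathcal{T}_{\mathcal{P}}:L^d_p\to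 L^d_p$ by $\mathcal{T}_{\mathcal{P}}(\mathcal{A})(q)=$ the common component of $\varphi_q^{(\mathcal{A},\mathcal{A})}$. An approximator of an operator $O$ on a complete lattice $L$ is a $\leq_p$-monotone $A:L^2\to L^2$ (precision order $(x,y)\leq_p(u,v)$ iff $x\leq u,v\leq y$) with $A(x,x)_1\leq O(x)\leq A(x,x)_2$. For $I\in 2^{\Sigma_p}$, $\pi_I:L^d_p\to 2^{\Sigma_d}$ maps $\mathcal{A}$ to $\{a\mid\mathcal{A}(a)\text{ is true in }I\}$ and $\pi_I^2(\mathcal{A}_1,\mathcal{A}_2)=(\pi_I(\mathcal{A}_1),\pi_I(\mathcal{A}_2))$. $\Psi^I_{\mathcal{P}}$ is Fitting's operator on pairs $(J_1,J_2)$ of $\Sigma_d$-interpretations with $\Sigma_p$ fixed to $I$: $\Psi^I_{\mathcal{P}}(J_1,J_2)_1=\{q\mid$ some rule body for $q$ is true in Kleene three-valued evaluation$\}$, $\Psi^I_{\mathcal{P}}(J_1,J_2)_2=\{q\mid$ some rule body for $q$ is not false$\}$ (for general pairs the same evaluation with negation swapping and negating the two components). *)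

theory Defs
  imports Main
begin

datatype 'a pform = PAtom 'a | PTrue | PFalse | PNot "'a pform"
  | PAnd "'a pform" "'a pform" | POr "'a pform" "'a pform"

fun peval :: "('a \<Rightarrow> bool) \<Rightarrow> 'a pform \<Rightarrow> bool" where
  "peval v (PAtom a) = v a"
| "peval v PTrue = True"
| "peval v PFalse = False"
| "peval v (PNot f) = (\<not> peval v f)"
| "peval v (PAnd f g) = (peval v f \<and> peval v g)"
| "peval v (POr f g) = (peval v f \<or> peval v g)"

definition pequiv :: "'a pform \<Rightarrow> 'a pform \<Rightarrow> bool" where
  "pequiv f g \<longleftrightarrow> (\<forall>v. peval v f = peval v g)"

lemma equivp_pequiv: "equivp pequiv"
  by (rule equivpI) (auto simp: reflp_def symp_def transp_def pequiv_def)

quotient_type 'a lp = "'a pform" / pequiv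
  by (rule equivp_pequiv)

instantiation lp :: (type) order
begin
lift_definition less_eq_lp :: "'a lp \<Rightarrow> 'a lp \<Rightarrow> bool"
  is "\<lambda>f g. \<forall>v. peval v f \<longrightarrow> peval v g"
  by (auto simp: pequiv_def)
definition less_lp :: "'a lp \<Rightarrow> 'a lp \<Rightarrow> bool" where
  "less_lp x y \<longleftrightarrow> x \<le> y \<and> \<not> y \<le> x"
instance
proof
  fix x y z :: "'a lp"
  show "(x < y) = (x \<le> y \<and> \<not> y \<le> x)" by (simp add: less_lp_def)
  show "x \<le> x" by transfer auto
  show "x \<le> y \<Longrightarrow> y \<le> z \<Longrightarrow> x \<le> z" by transfer auto
  show "x \<le> y \<Longrightarrow> y \<le> x \<Longrightarrow> x = y" by transfer (auto simp: pequiv_def)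
qed
end

lift_definition lp_cls_atom :: "'a \<Rightarrow> 'a lp" is PAtom .
lift_definition lp_true :: "'a lp" is PTrue .
lift_definition lp_false :: "'a lp" is PFalse .
lift_definition lp_not :: "'a lp \<Rightarrow> 'a lp" is PNot by (auto simp: pequiv_def)
lift_definition lp_and :: "'a lp \<Rightarrow> 'a lp \<Rightarrow> 'a lp" is PAnd by (auto simp: pequiv_def)
lift_definition lp_or :: "'a lp \<Rightarrow> 'a lp \<Rightarrow> 'a lp" is POr by (auto simp: pequiv_def)

lift_definition lp_holds :: "'a set \<Rightarrow> 'a lp \<Rightarrow> bool" is "\<lambda>I f. peval (\<lambda>a. a \<in> I) f"
  by (auto simp: pequiv_def)

text \<open>Alphabet \<open>\<Sigma> = \<Sigma>_p \<union> \<Sigma>_d\<close> is the disjoint sum \<open>'p + 'd\<close>.\<close>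

datatype 'a literal = Pos 'a | Neg 'a

datatype ('p, 'd) rule = Rule (head: 'd) (body: "('p + 'd) literal list")

type_synonym ('p, 'd) program = "('p, 'd) rule list"

fun lit_form :: "'a literal \<Rightarrow> 'a pform" where
  "lit_form (Pos a) = PAtom a"
| "lit_form (Neg a) = PNot (PAtom a)"

definition body_form :: "('p, 'd) rule \<Rightarrow> ('p + 'd) pform" where
  "body_form r = foldr PAnd (map lit_form (body r)) PTrue"

definition phi :: "('p, 'd) program \<Rightarrow> 'd \<Rightarrow> ('p + 'd) pform" where
  "phi P q = foldr POr (map body_form (filter (\<lambda>r. head r = q) P)) PFalse"

fun ev :: "('d \<Rightarrow> 'p lp) \<times> ('d \<Rightarrow> 'p lp) \<Rightarrow> ('p + 'd) pform \<Rightarrow> 'p lp \<times> 'p lp" where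
  "ev S (PAtom (Inl p)) = (lp_cls_atom p, lp_cls_atom p)"
| "ev S (PAtom (Inr q)) = (fst S q, snd S q)"
| "ev S PTrue = (lp_true, lp_true)"
| "ev S PFalse = (lp_false, lp_false)"
| "ev S (PNot f) = (lp_not (snd (ev S f)), lp_not (fst (ev S f)))"
| "ev S (PAnd f g) = (lp_and (fst (ev S f)) (fst (ev S g)), lp_and (snd (ev S f)) (snd (ev S g)))"
| "ev S (POr f g) = (lp_or (fst (ev S f)) (fst (ev S g)), lp_or (snd (ev S f)) (snd (ev S g)))"

definition Psi :: "('p, 'd) program \<Rightarrow> ('d \<Rightarrow> 'p lp) \<times> ('d \<Rightarrow> 'p lp) \<Rightarrow> ('d \<Rightarrow> 'p lp) \<times> ('d \<Rightarrow> 'p lp)" where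
  "Psi P S = ((\<lambda>q. fst (ev S (phi P q))), (\<lambda>q. snd (ev S (phi P q))))"

text \<open>\<open>T_P(A)(q)\<close>: the common component of \<open>\<phi>_q^{(A,A)}\<close> (we take the first one).\<close>
definition T :: "('p, 'd) program \<Rightarrow> ('d \<Rightarrow> 'p lp) \<Rightarrow> ('d \<Rightarrow> 'p lp)" where
  "T P A = (\<lambda>q. fst (ev (A, A) (phi P q)))"

definition prec_le :: "'l::order \<times> 'l \<Rightarrow> 'l \<times> 'l \<Rightarrow> bool" where
  "prec_le a b \<longleftrightarrow> fst a \<le> fst b \<and> snd b \<le> snd a"

definition is_approximator :: "('l::order \<times> 'l \<Rightarrow> 'l \<times> 'l) \<Rightarrow> ('l \<Rightarrow> 'l) \<Rightarrow> bool" where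
  "is_approximator A Op \<longleftrightarrow>
     (\<forall>a b. prec_le a b \<longrightarrow> prec_le (A a) (A b)) \<and>
     (\<forall>x. fst (A (x, x)) \<le> Op x \<and> Op x \<le> snd (A (x, x)))"

definition proj :: "'p set \<Rightarrow> ('d \<Rightarrow> 'p lp) \<Rightarrow> 'd set" where
  "proj I A = {a. lp_holds I (A a)}"

definition proj2 :: "'p set \<Rightarrow> ('d \<Rightarrow> 'p lp) \<times> ('d \<Rightarrow> 'p lp) \<Rightarrow> 'd set \<times> 'd set" where
  "proj2 I S = (proj I (fst S), proj I (snd S))"

text \<open>Kleene/Belnap evaluation of literals w.r.t. \<open>(J_1,J_2)\<close>, \<open>\<Sigma>_p\<close> fixed to \<open>I\<close>:
  first component (truth), second component (non-falsity); negation swaps.\<close>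
fun lit_val1 :: "'p set \<Rightarrow> 'd set \<times> 'd set \<Rightarrow> ('p + 'd) literal \<Rightarrow> bool" where
  "lit_val1 I J (Pos (Inl p)) = (p \<in> I)"
| "lit_val1 I J (Pos (Inr d)) = (d \<in> fst J)"
| "lit_val1 I J (Neg (Inl p)) = (p \<notin> I)"
| "lit_val1 I J (Neg (Inr d)) = (d \<notin> snd J)"

fun lit_val2 :: "'p set \<Rightarrow> 'd set \<times> 'd set \<Rightarrow> ('p + 'd) literal \<Rightarrow> bool" where
  "lit_val2 I J (Pos (Inl p)) = (p \<in> I)"
| "lit_val2 I J (Pos (Inr d)) = (d \<in> snd J)"
| "lit_val2 I J (Neg (Inl p)) = (p \<notin> I)"
| "lit_val2 I J (Neg (Inr d)) = (d \<notin> fst J)"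

definition Fitting :: "('p, 'd) program \<Rightarrow> 'p set \<Rightarrow> 'd set \<times> 'd set \<Rightarrow> 'd set \<times> 'd set" where
  "Fitting P I J =
     ({q. \<exists>r\<in>set P. head r = q \<and> (\<forall>l\<in>set (body r). lit_val1 I J l)},
      {q. \<exists>r\<in>set P. head r = q \<and> (\<forall>l\<in>set (body r). lit_val2 I J l)})"

end

theory Submission
  imports Defs
begin

text \<open>The connectives of \<open>L_p\<close> are monotone
  for entailment except negation, which is antitone; since \<open>\<phi>\<^sup>S\<close> negates by swapping and
  negating the two components, evaluation is monotone for the precision order, and on exact
  pairs \<open>(A, A)\<close> both components coincide with \<open>\<T>\<^sub>\<P>(A)\<close>. Truth in \<open>I\<close> is a Boolean
  homomorphism \<open>L_p \<rightarrow> bool\<close>, so projecting \<open>\<phi>\<^sup>S\<close> along \<open>I\<close> is Kleene evaluation in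
  \<open>\<pi>\<^sub>I\<^sup>2(S)\<close>, literal by literal, and therefore rule by rule.\<close>

lemma lp_holds_not [simp]: "lp_holds I (lp_not x) \<longleftrightarrow> \<not> lp_holds I x"
  by transfer simp

lemma lp_holds_and [simp]: "lp_holds I (lp_and x y) \<longleftrightarrow> lp_holds I x \<and> lp_holds I y"
  by transfer simp

lemma lp_holds_or [simp]: "lp_holds I (lp_or x y) \<longleftrightarrow> lp_holds I x \<or> lp_holds I y"
  by transfer simp

lemma lp_holds_true [simp]: "lp_holds I lp_true"
  by transfer simp

lemma lp_holds_false [simp]: "\<not> lp_holds I lp_false"
  by transfer simp

lemma lp_holds_cls_atom [simp]: "lp_holds I (lp_cls_atom p) \<longleftrightarrow> p \<in> I"
  by transfer simp

lemma lp_not_antimono: "x \<le> y \<Longrightarrow> lp_not y \<le> lp_not x"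
  by transfer auto

lemma lp_and_mono: "x \<le> y \<Longrightarrow> u \<le> v \<Longrightarrow> lp_and x u \<le> lp_and y v"
  by transfer auto

lemma lp_or_mono: "x \<le> y \<Longrightarrow> u \<le> v \<Longrightarrow> lp_or x u \<le> lp_or y v"
  by transfer auto

lemma ev_prec_mono:
  assumes "prec_le S S'"
  shows "prec_le (ev S f) (ev S' f)"
proof (induction f)
  case (PAtom a)
  then show ?case
    using assms by (cases a) (auto simp: prec_le_def le_fun_def)
qed (auto simp: prec_le_def intro: lp_not_antimono lp_and_mono lp_or_mono)

lemma ev_exact: "fst (ev (A, A) f) = snd (ev (A, A) f)"
proof (induction f)
  case (PAtom a)
  then show ?case by (cases a) auto
qed auto

lemma Psi_prec_mono: "prec_le S S' \<Longrightarrow> prec_le (Psi P S) (Psi P S')"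
  using ev_prec_mono[of S S'] by (simp add: Psi_def prec_le_def le_fun_def)

lemma Psi_exact: "Psi P (A, A) = (T P A, T P A)"
  by (simp add: Psi_def T_def ev_exact)

lemma Psi_is_approximator: "is_approximator (Psi P) (T P)"
  unfolding is_approximator_def by (simp add: Psi_prec_mono Psi_exact)

lemma lp_holds_ev_lit_form:
  "lp_holds I (fst (ev S (lit_form l))) \<longleftrightarrow> lit_val1 I (proj2 I S) l"
  "lp_holds I (snd (ev S (lit_form l))) \<longleftrightarrow> lit_val2 I (proj2 I S) l"
  by (cases l; rename_tac a; case_tac a; simp add: proj2_def proj_def)+

lemma lp_holds_ev_conj:
  "lp_holds I (fst (ev S (foldr PAnd (map lit_form ls) PTrue)))
     \<longleftrightarrow> (\<forall>l\<in>set ls. lit_val1 I (proj2 I S) l)"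
  "lp_holds I (snd (ev S (foldr PAnd (map lit_form ls) PTrue)))
     \<longleftrightarrow> (\<forall>l\<in>set ls. lit_val2 I (proj2 I S) l)"
  by (induction ls) (auto simp: lp_holds_ev_lit_form)

lemma lp_holds_ev_disj:
  "lp_holds I (fst (ev S (foldr POr (map body_form rs) PFalse)))
     \<longleftrightarrow> (\<exists>r\<in>set rs. \<forall>l\<in>set (body r). lit_val1 I (proj2 I S) l)"
  "lp_holds I (snd (ev S (foldr POr (map body_form rs) PFalse)))
     \<longleftrightarrow> (\<exists>r\<in>set rs. \<forall>l\<in>set (body r). lit_val2 I (proj2 I S) l)"
  by (induction rs) (auto simp: body_form_def lp_holds_ev_conj)

lemma proj2_Psi: "proj2 I (Psi P S) = Fitting P I (proj2 I S)"
  by (auto simp: Fitting_def Psi_def phi_def lp_holds_ev_disj proj2_def[of I "(_, _)"] proj_def)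

theorem theorem4p9:
  fixes P :: "('p::finite, 'd::finite) program"
  shows "is_approximator (Psi P) (T P) \<and>
         (\<forall>I :: 'p set. Fitting P I \<circ> proj2 I = proj2 I \<circ> Psi P)"
  by (simp add: Psi_is_approximator proj2_Psi fun_eq_iff)

end
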